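(* Let $\mu$ be a probability measure on $\mathbb{R}$, absolutely continuous with density $f$, whose support is not included in $(-\infty,0)$. Let $$\mathcal{H}=\Big\{\sum_{k=1}^n\alpha_kf(t_k+\cdot):n\ge1,\ \alpha_k\in\mathbb{R},\ t_k\ge0\Big\},$$ viewed as a set of functions on $[0,\infty)$. If the restriction of $f$ to $[0,\infty)$ belongs to $L^\infty([0,\infty))$ and $\mathcal{H}$ is dense in $L^\infty([0,\infty))$, then for every $g\in L^1([0,\infty))$: if $\int_0^\infty f(t+s)g(s)\,ds=0$ for all $t\ge0$, then $g=0$ almost everywhere. Moreover, whenever this last implication holds (for all $g\in L^1([0,\infty))$), the measure $\mu$ is determined on $\mathbb{R}$ by the restrictions of $\mu$ and $\mu*\mu$ to $[0,\infty)$, i.e. any probability measure $\mu_1$ on $\mathbb{R}$ with $\mu_1=\mu$ and $\mu_1*\mu_1=\mu*\mu$ on $[0,\infty)$ equals $\mu$. *)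

theory Defs
  imports "HOL-Probability.Probability"
begin

definition measure_support :: "real measure \<Rightarrow> real set" where
  "measure_support M = {x. \<forall>U. open U \<and> x \<in> U \<longrightarrow> emeasure M U > 0}"

definition Linf_on :: "real set \<Rightarrow> (real \<Rightarrow> real) \<Rightarrow> bool" where
  "Linf_on S h \<longleftrightarrow> set_borel_measurable lborel S h \<and> (\<exists>C. AE x in lborel. x \<in> S \<longrightarrow> \<bar>h x\<bar> \<le> C)"

definition transl_span :: "(real \<Rightarrow> real) \<Rightarrow> (real \<Rightarrow> real) set" where
  "transl_span f = {u. \<exists>(n::nat) (\<alpha>::nat \<Rightarrow> real) (t::nat \<Rightarrow> real). n \<ge> 1 \<and> (\<forall>k\<in>{1..n}. t k \<ge> 0)
      \<and> u = (\<lambda>s. \<Sum>k=1..n. \<alpha> k * f (t k + s))}"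

definition dense_Linf_nonneg :: "(real \<Rightarrow> real) set \<Rightarrow> bool" where
  "dense_Linf_nonneg H \<longleftrightarrow> (\<forall>h. Linf_on {0..} h \<longrightarrow>
      (\<forall>\<epsilon>>0. \<exists>u\<in>H. AE x in lborel. x \<in> {0..} \<longrightarrow> \<bar>h x - u x\<bar> \<le> \<epsilon>))"

end

theory Submission
  imports Defs
begin

text \<open>
  First part, by duality: if \<open>g \<in> L\<^sup>1\<close> is annihilated by all translates \<open>f(t + \<cdot>)\<close>, it is
  annihilated by every \<open>u \<in> H\<close>; choosing \<open>u\<close> with \<open>|sgn g - u| \<le> 1/2\<close> gives
  \<open>\<integral>|g| = \<integral>(sgn g - u) g \<le> \<integral>|g|/2\<close>, so \<open>g = 0\<close>.

  Second part: split \<open>\<mu> = \<mu>\<^sub>- + \<mu>\<^sub>+\<close> into its restrictions to \<open>(-\<infinity>,0)\<close> and \<open>[0,\<infinity>)\<close>.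
  On subsets of \<open>[0,\<infinity>)\<close> we have \<open>\<mu>*\<mu> = 2 \<mu>\<^sub>-*\<mu>\<^sub>+ + \<mu>\<^sub>+*\<mu>\<^sub>+\<close>, so the hypotheses on
  \<open>\<mu>\<^sub>1\<close> force \<open>\<mu>\<^sub>1\<^sub>-*\<mu>\<^sub>+ = \<mu>\<^sub>-*\<mu>\<^sub>+\<close> there. Evaluated on \<open>(t, t+\<delta>]\<close> with \<open>\<mu>\<^sub>+ = f ds\<close>, this says
  that \<open>s \<mapsto> (\<mu>\<^sub>1\<^sub>- - \<mu>\<^sub>-)(-s, \<delta>-s]\<close> is annihilated by all translates of \<open>f\<close>, hence vanishes
  almost everywhere on \<open>[0,\<infinity>)\<close>. Right-continuity of distribution functions upgrades this to
  everywhere, which determines \<open>\<mu>\<^sub>1\<^sub>- = \<mu>\<^sub>-\<close>.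
\<close>

definition translates_annihilate :: "(real \<Rightarrow> real) \<Rightarrow> (real \<Rightarrow> real) \<Rightarrow> bool" where
  "translates_annihilate f g \<longleftrightarrow>
     (\<forall>t\<ge>0. set_integrable lborel {0..} (\<lambda>s. f (t + s) * g s)
            \<and> (LINT s:{0..}|lborel. f (t + s) * g s) = 0)"

definition translates_injective :: "(real \<Rightarrow> real) \<Rightarrow> bool" where
  "translates_injective f \<longleftrightarrow>
     (\<forall>g. set_integrable lborel {0..} g \<longrightarrow> translates_annihilate f g \<longrightarrow>
          (AE s in lborel. s \<in> {0..} \<longrightarrow> g s = 0))"

lemma AE_zero_if_orthogonal_to_sgn_approx:
  fixes g u :: "'a \<Rightarrow> real"
  assumes g: "set_integrable M S g"
    and ug: "set_integrable M S (\<lambda>x. u x * g x)"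
    and orth: "(LINT x:S|M. u x * g x) = 0"
    and approx: "AE x in M. x \<in> S \<longrightarrow> \<bar>sgn (g x) - u x\<bar> \<le> 1/2"
  shows "AE x in M. x \<in> S \<longrightarrow> g x = 0"
proof -
  define G where "G = (\<lambda>x. indicator S x * g x)"
  have absG: "integrable M (\<lambda>x. \<bar>G x\<bar>)"
    using g by (simp add: G_def set_integrable_def)
  have uG: "integrable M (\<lambda>x. u x * G x)" and uG0: "(\<integral>x. u x * G x \<partial>M) = 0"
    using ug orth by (simp_all add: G_def set_integrable_def set_lebesgue_integral_def mult_ac)
  have sgnG: "sgn (G x) * G x = \<bar>G x\<bar>" for x
    by (simp add: abs_sgn)
  have "(\<integral>x. \<bar>G x\<bar> \<partial>M) = (\<integral>x. (sgn (G x) - u x) * G x \<partial>M)"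
    using absG uG uG0 by (simp add: left_diff_distrib sgnG)
  also have "\<dots> \<le> (\<integral>x. 1/2 * \<bar>G x\<bar> \<partial>M)"
  proof (rule integral_mono_AE)
    show "integrable M (\<lambda>x. (sgn (G x) - u x) * G x)"
      using absG uG by (simp add: left_diff_distrib sgnG)
    show "AE x in M. (sgn (G x) - u x) * G x \<le> 1/2 * \<bar>G x\<bar>"
      using approx
    proof eventually_elim
      case (elim x)
      have "(sgn (G x) - u x) * G x \<le> \<bar>sgn (G x) - u x\<bar> * \<bar>G x\<bar>"
        by (metis abs_ge_self abs_mult)
      also have "\<dots> \<le> 1/2 * \<bar>G x\<bar>"
      proof (cases "x \<in> S")
        case True
        then show ?thesis using elim by (intro mult_right_mono) (auto simp: G_def)
      qed (simp add: G_def)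
      finally show ?case .
    qed
  qed (use absG in auto)
  finally have "(\<integral>x. \<bar>G x\<bar> \<partial>M) = 0"
    using integral_nonneg_AE[of "\<lambda>x. \<bar>G x\<bar>" M] by (simp add: antisym)
  then have "AE x in M. \<bar>G x\<bar> = 0"
    using absG by (subst (asm) integral_nonneg_eq_0_iff_AE) auto
  then show ?thesis by eventually_elim (auto simp: G_def)
qed

lemma transl_span_annihilates:
  assumes ann: "translates_annihilate f g" and u: "u \<in> transl_span f"
  shows "set_integrable lborel {0..} (\<lambda>s. u s * g s)"
    and "(LINT s:{0..}|lborel. u s * g s) = 0"
proof -
  from u obtain n :: nat and \<alpha> t :: "nat \<Rightarrow> real"
    where t: "\<forall>k\<in>{1..n}. t k \<ge> 0" and u_def: "u = (\<lambda>s. \<Sum>k=1..n. \<alpha> k * f (t k + s))"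
    unfolding transl_span_def by auto
  define F where "F k s = indicator {0..} s * (f (t k + s) * g s)" for k s
  have F: "integrable lborel (\<lambda>s. F k s)" "(\<integral>s. F k s \<partial>lborel) = 0" if "k \<in> {1..n}" for k
    using ann t that by (auto simp: F_def translates_annihilate_def set_integrable_def set_lebesgue_integral_def)
  have uF: "indicator {0..} s *\<^sub>R (u s * g s) = (\<Sum>k=1..n. \<alpha> k * F k s)" for s
    by (simp add: u_def F_def sum_distrib_left sum_distrib_right mult_ac)
  show "set_integrable lborel {0..} (\<lambda>s. u s * g s)"
    unfolding set_integrable_def uF
    by (intro Bochner_Integration.integrable_sum integrable_mult_right) (use F in auto)
  show "(LINT s:{0..}|lborel. u s * g s) = 0"
    unfolding set_lebesgue_integral_def uF using F by (subst Bochner_Integration.integral_sum) auto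
qed

lemma Linf_on_sgn:
  assumes "set_borel_measurable lborel S g"
  shows "Linf_on S (\<lambda>x. sgn (g x))"
proof -
  have "(\<lambda>x. indicator S x *\<^sub>R sgn (g x)) = (\<lambda>x. sgn (indicator S x *\<^sub>R g x))"
    by (auto simp: indicator_def fun_eq_iff)
  then have "set_borel_measurable lborel S (\<lambda>x. sgn (g x))"
    using assms by (simp add: set_borel_measurable_def)
  then show ?thesis
    unfolding Linf_on_def by (auto intro!: exI[of _ 1] simp: abs_sgn_eq)
qed

lemma dense_transl_span_imp_translates_injective:
  assumes dense: "dense_Linf_nonneg (transl_span f)"
  shows "translates_injective f"
  unfolding translates_injective_def
proof (intro allI impI)
  fix g assume g: "set_integrable lborel {0..} g" and ann: "translates_annihilate f g"
  have "set_borel_measurable lborel {0..} g"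
    using g by (simp add: set_integrable_def set_borel_measurable_def borel_measurable_integrable)
  then have "Linf_on {0..} (\<lambda>x. sgn (g x))"
    by (rule Linf_on_sgn)
  then obtain u where u: "u \<in> transl_span f"
    and approx: "AE x in lborel. x \<in> {0..} \<longrightarrow> \<bar>sgn (g x) - u x\<bar> \<le> 1/2"
    using dense unfolding dense_Linf_nonneg_def by (meson field_sum_of_halves half_gt_zero zero_less_one)
  show "AE s in lborel. s \<in> {0..} \<longrightarrow> g s = 0"
    using AE_zero_if_orthogonal_to_sgn_approx[OF g transl_span_annihilates[OF ann u] approx] .
qed

lemma density_indicator_eqI:
  assumes N: "sets N = sets borel" and M: "sets M = sets borel" and S: "S \<in> sets borel"
    and agree: "\<forall>A\<in>sets borel. A \<subseteq> S \<longrightarrow> emeasure N A = emeasure M A"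
  shows "density N (indicator S) = density M (indicator S)"
proof (rule measure_eqI)
  fix A assume "A \<in> sets (density N (indicator S))"
  then have "A \<in> sets borel" using N by simp
  then show "emeasure (density N (indicator S)) A = emeasure (density M (indicator S)) A"
    using N M S agree by (simp add: emeasure_restricted)
qed (use N M in simp)

lemma nn_integral_indicator_eq_if_agree:
  assumes N: "sets N = sets borel" and M: "sets M = sets borel" and S: "S \<in> sets borel"
    and agree: "\<forall>A\<in>sets borel. A \<subseteq> S \<longrightarrow> emeasure N A = emeasure M A"
    and \<phi>: "\<phi> \<in> borel_measurable borel"
  shows "(\<integral>\<^sup>+x. indicator S x * \<phi> x \<partial>N) = (\<integral>\<^sup>+x. indicator S x * \<phi> x \<partial>M)"
proof -
  note [measurable_cong] = N M and [measurable] = S \<phi>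
  have "(\<integral>\<^sup>+x. indicator S x * \<phi> x \<partial>N) = (\<integral>\<^sup>+x. \<phi> x \<partial>density N (indicator S))"
    by (rule nn_integral_density[symmetric]) measurable
  also have "\<dots> = (\<integral>\<^sup>+x. \<phi> x \<partial>density M (indicator S))"
    by (simp add: density_indicator_eqI[OF N M S agree])
  also have "\<dots> = (\<integral>\<^sup>+x. indicator S x * \<phi> x \<partial>M)"
    by (rule nn_integral_density) measurable
  finally show ?thesis .
qed

lemma measure_eq_if_restrictions_eq:
  assumes N: "sets N = sets borel" and M: "sets M = sets borel" and S: "S \<in> sets borel"
    and eq: "density N (indicator S) = density M (indicator S)"
    and eq_compl: "density N (indicator (- S)) = density M (indicator (- S))"
  shows "N = M"
proof (rule measure_eqI)
  have split: "emeasure K A = emeasure (density K (indicator S)) A + emeasure (density K (indicator (- S))) A"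
    if K: "sets K = sets borel" and A: "A \<in> sets borel" for K A
  proof -
    have "emeasure K A = emeasure K (S \<inter> A) + emeasure K (- S \<inter> A)"
      using K A S by (subst plus_emeasure) (auto intro: arg_cong[where f="emeasure K"])
    then show ?thesis using K A S by (simp add: emeasure_restricted)
  qed
  fix A assume "A \<in> sets N"
  then show "emeasure N A = emeasure M A"
    using split[OF N] split[OF M] eq eq_compl N by simp
qed (use N M in simp)

definition negative_restriction :: "real measure \<Rightarrow> real measure" where
  "negative_restriction N = density N (indicator {..<0})"

lemma finite_borel_measure_negative_restriction:
  assumes "finite_borel_measure N"
  shows "finite_borel_measure (negative_restriction N)"
  using assms unfolding negative_restriction_def finite_borel_measure_def finite_borel_measure_axioms_def
  by (simp add: finite_measure.finite_measure_restricted)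

lemma emeasure_negative_restriction:
  "sets N = sets borel \<Longrightarrow> X \<in> sets borel \<Longrightarrow>
    emeasure (negative_restriction N) X = emeasure N ({..<0} \<inter> X)"
  unfolding negative_restriction_def by (simp add: emeasure_restricted)

lemma cdf_negative_restriction:
  "sets N = sets borel \<Longrightarrow> cdf (negative_restriction N) x = measure N ({..<0} \<inter> {..x})"
  by (simp add: cdf_def measure_def emeasure_negative_restriction)

lemma nn_integral_convolution_indicator_swap:
  fixes N :: "real measure"
  assumes Nf: "finite_measure N" and Ns: "sets N = sets borel"
    and [measurable]: "S \<in> sets borel" "T \<in> sets borel" "A \<in> sets borel"
  shows "(\<integral>\<^sup>+x. indicator S x * (\<integral>\<^sup>+y. indicator T y * indicator A (x+y) \<partial>N) \<partial>N)
       = (\<integral>\<^sup>+x. indicator T x * (\<integral>\<^sup>+y. indicator S y * indicator A (x+y) \<partial>N) \<partial>N)"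
proof -
  interpret N: finite_measure N by fact
  interpret NN: pair_sigma_finite N N
    unfolding pair_sigma_finite_def using N.sigma_finite_measure by simp
  note [measurable_cong] = Ns
  have "(\<integral>\<^sup>+x. indicator S x * (\<integral>\<^sup>+y. indicator T y * indicator A (x+y) \<partial>N) \<partial>N)
      = (\<integral>\<^sup>+x. \<integral>\<^sup>+y. indicator S x * (indicator T y * indicator A (x+y)) \<partial>N \<partial>N)"
    by (intro nn_integral_cong nn_integral_cmult[symmetric]) measurable
  also have "\<dots> = (\<integral>\<^sup>+y. \<integral>\<^sup>+x. indicator S x * (indicator T y * indicator A (x+y)) \<partial>N \<partial>N)"
    by (rule NN.Fubini'[symmetric]) measurable
  also have "\<dots> = (\<integral>\<^sup>+y. indicator T y * (\<integral>\<^sup>+x. indicator S x * indicator A (y+x) \<partial>N) \<partial>N)"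
    by (intro nn_integral_cong, subst nn_integral_cmult[symmetric])
      (auto intro!: nn_integral_cong simp: ac_simps)
  finally show ?thesis .
qed

text \<open>Since \<open>A \<subseteq> [0,\<infinity>)\<close>, a pair \<open>(x, y)\<close> with \<open>x + y \<in> A\<close> has at most one negative
  coordinate; by symmetry both mixed-sign contributions are equal, and the other terms only see
  \<open>N\<close> on \<open>[0,\<infinity>)\<close>, where it agrees with \<open>M\<close>.\<close>
lemma emeasure_convolution_split_at_zero:
  fixes N M :: "real measure"
  assumes Nf: "finite_measure N" and Ns: "sets N = sets borel"
    and Mf: "finite_measure M" and Ms: "sets M = sets borel"
    and agree: "\<forall>A\<in>sets borel. A \<subseteq> {0..} \<longrightarrow> emeasure N A = emeasure M A"
    and A: "A \<in> sets borel" and A0: "A \<subseteq> {0..}"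
  shows "emeasure (N \<star> N) A =
    2 * (\<integral>\<^sup>+x. indicator {..<0} x * (\<integral>\<^sup>+y. indicator {0..} y * indicator A (x+y) \<partial>M) \<partial>N)
    + (\<integral>\<^sup>+x. indicator {0..} x * (\<integral>\<^sup>+y. indicator {0..} y * indicator A (x+y) \<partial>M) \<partial>M)"
proof -
  interpret N: finite_measure N by fact
  interpret M: finite_measure M by fact
  note [measurable_cong] = Ns Ms and [measurable] = A
  define K where "K x = (\<integral>\<^sup>+y. indicator {0..} y * indicator A (x+y) \<partial>M)" for x
  define L where "L x = (\<integral>\<^sup>+y. indicator {..<0} y * indicator A (x+y) \<partial>N)" for x
  have K_meas[measurable]: "K \<in> borel_measurable borel"
    unfolding K_def by (rule M.borel_measurable_nn_integral) measurable
  have [measurable]: "L \<in> borel_measurable borel"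
    unfolding L_def by (rule N.borel_measurable_nn_integral) measurable
  have K_N: "(\<integral>\<^sup>+y. indicator {0..} y * indicator A (x+y) \<partial>N) = K x" for x
    unfolding K_def by (rule nn_integral_indicator_eq_if_agree[OF Ns Ms _ agree]) measurable
  have inner: "(\<integral>\<^sup>+y. indicator A (x+y) \<partial>N) = L x + K x" for x
  proof -
    have "(\<integral>\<^sup>+y. indicator A (x+y) \<partial>N)
        = (\<integral>\<^sup>+y. indicator {..<0} y * indicator A (x+y) + indicator {0..} y * indicator A (x+y) \<partial>N)"
      by (intro nn_integral_cong) (auto split: split_indicator)
    also have "\<dots> = L x + K x"
      unfolding L_def K_N[symmetric] by (rule nn_integral_add) measurable
    finally show ?thesis .
  qed
  have L_neg: "L x = 0" if "x < 0" for x
  proof -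
    have "L x = (\<integral>\<^sup>+y. 0 \<partial>N)"
      unfolding L_def using that A0 by (intro nn_integral_cong) (auto split: split_indicator)
    then show ?thesis by simp
  qed
  have symmetric: "(\<integral>\<^sup>+x. indicator {0..} x * L x \<partial>N) = (\<integral>\<^sup>+x. indicator {..<0} x * K x \<partial>N)"
    unfolding L_def K_N[symmetric] by (rule nn_integral_convolution_indicator_swap[OF Nf Ns]) auto
  have "emeasure (N \<star> N) A = (\<integral>\<^sup>+x. \<integral>\<^sup>+y. indicator A (x + y) \<partial>N \<partial>N)"
    by (rule convolution_emeasure'[OF A Nf Nf Ns Ns])
  also have "\<dots> = (\<integral>\<^sup>+x. indicator {..<0} x * K x
                    + (indicator {0..} x * L x + indicator {0..} x * K x) \<partial>N)"
    by (intro nn_integral_cong) (auto simp: inner L_neg split: split_indicator)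
  also have "\<dots> = (\<integral>\<^sup>+x. indicator {..<0} x * K x \<partial>N)
                 + ((\<integral>\<^sup>+x. indicator {0..} x * L x \<partial>N) + (\<integral>\<^sup>+x. indicator {0..} x * K x \<partial>N))"
    by (subst nn_integral_add; (subst nn_integral_add)?) measurable
  also have "(\<integral>\<^sup>+x. indicator {0..} x * K x \<partial>N) = (\<integral>\<^sup>+x. indicator {0..} x * K x \<partial>M)"
    by (rule nn_integral_indicator_eq_if_agree[OF Ns Ms _ agree K_meas]) simp
  finally show ?thesis unfolding symmetric K_def by (simp add: mult_2 add.assoc)
qed

lemma cross_term_density:
  fixes f :: "real \<Rightarrow> real" and N :: "real measure"
  assumes Nf: "finite_measure N" and Ns: "sets N = sets borel"
    and f[measurable]: "f \<in> borel_measurable borel" and t: "t \<ge> 0"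
  shows "(\<integral>\<^sup>+x. indicator {..<0} x *
            (\<integral>\<^sup>+y. indicator {0..} y * indicator {t<..t+\<delta>} (x+y) \<partial>density lborel (\<lambda>x. ennreal (f x))) \<partial>N)
       = (\<integral>\<^sup>+s. ennreal (f (t+s)) * emeasure (negative_restriction N) {-s<..\<delta>-s} \<partial>lborel)"
proof -
  interpret N: finite_measure N by fact
  interpret P: pair_sigma_finite N lborel
    unfolding pair_sigma_finite_def using N.sigma_finite_measure lborel.sigma_finite_measure_axioms by simp
  note [measurable_cong] = Ns
  define k where "k x s = (if x < 0 \<and> -x < s \<and> s \<le> \<delta> - x then ennreal (f (t+s)) else 0)" for x s
  have inner: "indicator {..<0} x *
      (\<integral>\<^sup>+y. indicator {0..} y * indicator {t<..t+\<delta>} (x+y) \<partial>density lborel (\<lambda>x. ennreal (f x)))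
      = (\<integral>\<^sup>+s. k x s \<partial>lborel)" for x
  proof (cases "x < 0")
    case True
    have "(\<integral>\<^sup>+y. indicator {0..} y * indicator {t<..t+\<delta>} (x+y) \<partial>density lborel (\<lambda>x. ennreal (f x)))
        = (\<integral>\<^sup>+y. ennreal (f y) * (indicator {0..} y * indicator {t<..t+\<delta>} (x+y)) \<partial>lborel)"
      by (rule nn_integral_density) measurable
    also have "\<dots> = (\<integral>\<^sup>+s. ennreal (f (t + s)) * (indicator {0..} (t + s) * indicator {t<..t+\<delta>} (x + (t + s))) \<partial>lborel)"
      using nn_integral_real_affine[where c=1 and t=t,
          of "\<lambda>y. ennreal (f y) * (indicator {0..} y * indicator {t<..t+\<delta>} (x+y))"]
      by simp
    also have "\<dots> = (\<integral>\<^sup>+s. k x s \<partial>lborel)"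
      using True t by (intro nn_integral_cong) (auto simp: k_def split: split_indicator)
    finally show ?thesis using True by simp
  qed (simp add: k_def)
  have "(\<integral>\<^sup>+x. \<integral>\<^sup>+s. k x s \<partial>lborel \<partial>N) = (\<integral>\<^sup>+s. \<integral>\<^sup>+x. k x s \<partial>N \<partial>lborel)"
    unfolding k_def by (rule P.Fubini'[symmetric]) measurable
  also have "\<dots> = (\<integral>\<^sup>+s. ennreal (f (t+s)) * emeasure N ({..<0} \<inter> {-s<..\<delta>-s}) \<partial>lborel)"
    using Ns by (intro nn_integral_cong, subst nn_integral_cmult_indicator[symmetric])
      (auto intro!: nn_integral_cong simp: k_def split: split_indicator)
  finally show ?thesis
    using Ns by (simp add: inner emeasure_negative_restriction)
qed

lemma integrable_measure_reflected_interval: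
  fixes P :: "real measure"
  assumes "finite_borel_measure P" and \<delta>: "\<delta> \<ge> 0"
  shows "integrable lborel (\<lambda>s. measure P {-s<..\<delta>-s})"
proof -
  interpret P: finite_borel_measure P by fact
  note Ps[measurable_cong] = P.M_is_borel
  interpret PL: pair_sigma_finite P lborel
    unfolding pair_sigma_finite_def using P.sigma_finite_measure lborel.sigma_finite_measure_axioms by simp
  define k where "k s x = (of_bool (-s < x \<and> x \<le> \<delta> - s) :: ennreal)" for s x
  have k: "emeasure P {-s<..\<delta>-s} = (\<integral>\<^sup>+x. k s x \<partial>P)" for s
  proof -
    have "emeasure P {-s<..\<delta>-s} = (\<integral>\<^sup>+x. indicator {-s<..\<delta>-s} x \<partial>P)"
      using Ps by simp
    then show ?thesis by (simp add: k_def indicator_def)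
  qed
  have "(\<lambda>s. \<integral>\<^sup>+x. k s x \<partial>P) \<in> borel_measurable borel"
    unfolding k_def by (rule P.borel_measurable_nn_integral) measurable
  then have meas: "(\<lambda>s. measure P {-s<..\<delta>-s}) \<in> borel_measurable lborel"
    unfolding measure_def k by simp
  have "(\<integral>\<^sup>+s. ennreal (measure P {-s<..\<delta>-s}) \<partial>lborel) = (\<integral>\<^sup>+s. \<integral>\<^sup>+x. k s x \<partial>P \<partial>lborel)"
    by (simp add: P.emeasure_eq_measure[symmetric] k)
  also have "\<dots> = (\<integral>\<^sup>+x. \<integral>\<^sup>+s. k s x \<partial>lborel \<partial>P)"
    unfolding k_def by (rule PL.Fubini') measurable
  also have "\<dots> = (\<integral>\<^sup>+x. ennreal \<delta> \<partial>P)"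
  proof (intro nn_integral_cong)
    fix x
    have "(\<integral>\<^sup>+s. k s x \<partial>lborel) = (\<integral>\<^sup>+s. indicator {-x<..\<delta>-x} s \<partial>lborel)"
      by (intro nn_integral_cong) (auto simp: k_def indicator_def)
    then show "(\<integral>\<^sup>+s. k s x \<partial>lborel) = ennreal \<delta>" using \<delta> by simp
  qed
  also have "\<dots> < \<infinity>"
    by (simp add: ennreal_mult_less_top P.emeasure_eq_measure)
  finally show ?thesis
    by (intro integrableI_nonneg meas) auto
qed

lemma cross_terms_eq_if_convolution_squares_agree:
  fixes M M1 :: "real measure" and f :: "real \<Rightarrow> real"
  assumes Mf: "finite_measure M" and f: "f \<in> borel_measurable borel"
    and dens: "M = density lborel (\<lambda>x. ennreal (f x))"
    and M1f: "finite_measure M1" and M1s: "sets M1 = sets borel"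
    and agree: "\<forall>A\<in>sets borel. A \<subseteq> {0..} \<longrightarrow> emeasure M1 A = emeasure M A"
    and agree_conv: "\<forall>A\<in>sets borel. A \<subseteq> {0..} \<longrightarrow> emeasure (M1 \<star> M1) A = emeasure (M \<star> M) A"
    and t: "t \<ge> 0"
  shows "(\<integral>\<^sup>+s. ennreal (f (t+s)) * emeasure (negative_restriction M1) {-s<..\<delta>-s} \<partial>lborel)
       = (\<integral>\<^sup>+s. ennreal (f (t+s)) * emeasure (negative_restriction M) {-s<..\<delta>-s} \<partial>lborel)"
proof -
  have Ms: "sets M = sets borel" using dens by simp
  have A: "{t<..t+\<delta>} \<in> sets borel" "{t<..t+\<delta>} \<subseteq> {0..}" using t by auto
  define cross where "cross N = (\<integral>\<^sup>+x. indicator {..<0} x *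
      (\<integral>\<^sup>+y. indicator {0..} y * indicator {t<..t+\<delta>} (x+y) \<partial>M) \<partial>N)" for N
  define C where "C = (\<integral>\<^sup>+x. indicator {0..} x *
      (\<integral>\<^sup>+y. indicator {0..} y * indicator {t<..t+\<delta>} (x+y) \<partial>M) \<partial>M)"
  have M1_conv: "emeasure (M1 \<star> M1) {t<..t+\<delta>} = 2 * cross M1 + C"
    unfolding cross_def C_def by (rule emeasure_convolution_split_at_zero[OF M1f M1s Mf Ms agree A])
  have M_conv: "emeasure (M \<star> M) {t<..t+\<delta>} = 2 * cross M + C"
    unfolding cross_def C_def by (rule emeasure_convolution_split_at_zero[OF Mf Ms Mf Ms _ A]) simp
  have "emeasure (M \<star> M) {t<..t+\<delta>} \<noteq> \<infinity>"
    using finite_measure.emeasure_finite[OF convolution_finite[OF Mf Mf Ms Ms]] by simp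
  then have "C \<noteq> \<infinity>" using M_conv by (auto simp: top_add)
  moreover have "2 * cross M1 + C = 2 * cross M + C"
    using agree_conv A M1_conv M_conv by metis
  ultimately have "cross M1 = cross M"
    by (simp add: ennreal_mult_cancel_left)
  then show ?thesis
    using cross_term_density[OF M1f M1s f t, of \<delta>] cross_term_density[OF Mf Ms f t, of \<delta>]
    unfolding cross_def dens by simp
qed

lemma integral_translate_mult_measure_reflected_interval:
  fixes f :: "real \<Rightarrow> real" and P :: "real measure"
  assumes f: "integrable lborel f" and f_nonneg: "AE x in lborel. 0 \<le> f x"
    and P: "finite_borel_measure P" and \<delta>: "\<delta> \<ge> 0"
  shows "integrable lborel (\<lambda>s. f (t+s) * measure P {-s<..\<delta>-s})"
    and "(\<integral>s. f (t+s) * measure P {-s<..\<delta>-s} \<partial>lborel)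
          = enn2real (\<integral>\<^sup>+s. ennreal (f (t+s)) * emeasure P {-s<..\<delta>-s} \<partial>lborel)"
proof -
  interpret P: finite_borel_measure P by fact
  note Ps = P.M_is_borel
  have [measurable]: "f \<in> borel_measurable borel"
    using borel_measurable_integrable[OF f] by simp
  have f_t: "integrable lborel (\<lambda>s. f (t + s))"
    using lborel_integrable_real_affine[OF f, of 1 t] by simp
  have f_t_nonneg: "AE s in lborel. 0 \<le> f (t + s)"
  proof -
    have "AE x in distr lborel borel ((+) t). 0 \<le> f x"
      using f_nonneg by (simp only: lborel_distr_plus[of t])
    then show ?thesis by (subst (asm) AE_distr_iff) auto
  qed
  have H: "(\<lambda>s. measure P {-s<..\<delta>-s}) \<in> borel_measurable lborel"
    using integrable_measure_reflected_interval[OF P \<delta>] by auto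
  have H_le: "measure P {-s<..\<delta>-s} \<le> measure P (space P)" for s
    using Ps sets_eq_imp_space_eq[OF Ps] by (intro P.finite_measure_mono) auto
  show int: "integrable lborel (\<lambda>s. f (t+s) * measure P {-s<..\<delta>-s})"
  proof (rule Bochner_Integration.integrable_bound)
    show "integrable lborel (\<lambda>s. f (t + s) * measure P (space P))"
      using f_t by simp
    show "AE s in lborel. norm (f (t+s) * measure P {-s<..\<delta>-s}) \<le> norm (f (t + s) * measure P (space P))"
      using f_t_nonneg by eventually_elim (simp add: abs_mult mult_left_mono H_le)
  qed (use f_t H in measurable)
  have "(\<integral>s. f (t+s) * measure P {-s<..\<delta>-s} \<partial>lborel)
      = enn2real (\<integral>\<^sup>+s. ennreal (f (t+s) * measure P {-s<..\<delta>-s}) \<partial>lborel)"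
    using f_t_nonneg int by (intro integral_eq_nn_integral) auto
  also have "(\<integral>\<^sup>+s. ennreal (f (t+s) * measure P {-s<..\<delta>-s}) \<partial>lborel)
      = (\<integral>\<^sup>+s. ennreal (f (t+s)) * emeasure P {-s<..\<delta>-s} \<partial>lborel)"
    by (intro nn_integral_cong) (simp add: ennreal_mult'' P.emeasure_eq_measure)
  finally show "(\<integral>s. f (t+s) * measure P {-s<..\<delta>-s} \<partial>lborel)
      = enn2real (\<integral>\<^sup>+s. ennreal (f (t+s)) * emeasure P {-s<..\<delta>-s} \<partial>lborel)" .
qed

lemma negative_restriction_increments_annihilated:
  fixes M M1 :: "real measure" and f :: "real \<Rightarrow> real"
  assumes Mp: "prob_space M" and f: "f \<in> borel_measurable borel"
    and f_nonneg: "AE x in lborel. 0 \<le> f x"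
    and dens: "M = density lborel (\<lambda>x. ennreal (f x))"
    and M1f: "finite_measure M1" and M1s: "sets M1 = sets borel"
    and agree: "\<forall>A\<in>sets borel. A \<subseteq> {0..} \<longrightarrow> emeasure M1 A = emeasure M A"
    and agree_conv: "\<forall>A\<in>sets borel. A \<subseteq> {0..} \<longrightarrow> emeasure (M1 \<star> M1) A = emeasure (M \<star> M) A"
    and \<delta>: "\<delta> \<ge> 0"
  shows "translates_annihilate f
           (\<lambda>s. measure (negative_restriction M1) {-s<..\<delta>-s} - measure (negative_restriction M) {-s<..\<delta>-s})"
proof -
  interpret M: prob_space M by fact
  have Ms: "sets M = sets borel" using dens by simp
  have f_int: "integrable lborel f"
  proof (rule integrableI_nonneg)
    have "(\<integral>\<^sup>+x. ennreal (f x) \<partial>lborel) = emeasure M (space M)"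
      unfolding dens using f by (simp add: emeasure_density)
    then show "(\<integral>\<^sup>+x. ennreal (f x) \<partial>lborel) < \<infinity>" by (simp add: M.emeasure_space_1)
  qed (use f f_nonneg in auto)
  define H where "H N s = measure (negative_restriction N) {-s<..\<delta>-s}" for N s
  have H_nonpos: "H N s = 0" if "sets N = sets borel" "s \<le> 0" for N s
  proof -
    have "{..<0} \<inter> {-s<..\<delta>-s} = {}" using that by auto
    then show ?thesis using that by (simp add: H_def measure_def emeasure_negative_restriction)
  qed
  have "finite_borel_measure M1" "finite_borel_measure M"
    using M1f M1s M.finite_measure_axioms Ms
    by (simp_all add: finite_borel_measure_def finite_borel_measure_axioms_def)
  note restr = this[THEN finite_borel_measure_negative_restriction]
  note I1 = integral_translate_mult_measure_reflected_interval[OF f_int f_nonneg restr(1) \<delta>, folded H_def]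
  note I = integral_translate_mult_measure_reflected_interval[OF f_int f_nonneg restr(2) \<delta>, folded H_def]
  show ?thesis
    unfolding translates_annihilate_def H_def[symmetric]
  proof (intro allI impI conjI)
    fix t :: real assume t: "t \<ge> 0"
    have ind: "indicator {0..} s *\<^sub>R (f (t + s) * (H M1 s - H M s)) = f (t + s) * H M1 s - f (t + s) * H M s" for s
      by (cases "s \<ge> 0") (auto simp: H_nonpos M1s Ms algebra_simps)
    show "set_integrable lborel {0..} (\<lambda>s. f (t + s) * (H M1 s - H M s))"
      unfolding set_integrable_def ind using I1(1) I(1) by simp
    show "(LINT s:{0..}|lborel. f (t + s) * (H M1 s - H M s)) = 0"
      unfolding set_lebesgue_integral_def ind using I1 I
      by (simp add: H_def cross_terms_eq_if_convolution_squares_agree[OF M.finite_measure_axioms f dens M1f M1s agree agree_conv t])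
  qed
qed

lemma continuous_at_left_reflect:
  fixes F :: "real \<Rightarrow> real"
  assumes "continuous (at_right (c - x)) F"
  shows "continuous (at_left x) (\<lambda>u. F (c - u))"
proof -
  have "filterlim (\<lambda>u. c - u) (at_right (c - x)) (at_left x)"
    unfolding filterlim_at by (auto simp: eventually_at_filter intro!: tendsto_eq_intros)
  with assms show ?thesis
    unfolding continuous_within by (auto intro: filterlim_compose)
qed

lemma AE_zero_imp_zero_at_left_continuous:
  fixes g :: "real \<Rightarrow> real"
  assumes cont: "continuous (at_left x) g" and ae: "AE y in lborel. y \<in> {a..} \<longrightarrow> g y = 0"
    and x: "a < x"
  shows "g x = 0"
proof (rule ccontr)
  assume "g x \<noteq> 0"
  moreover have "(g \<longlongrightarrow> g x) (at_left x)" using cont by (simp add: continuous_within)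
  ultimately have "eventually (\<lambda>y. g y \<noteq> 0) (at_left x)"
    by (simp add: tendsto_imp_eventually_ne)
  then obtain b where b: "b < x" "\<And>y. b < y \<Longrightarrow> y < x \<Longrightarrow> g y \<noteq> 0"
    using x by (auto simp: eventually_at_left)
  define c where "c = max a b"
  have "AE y in lborel. y \<notin> {c<..<x}"
    using ae by eventually_elim (use b in \<open>auto simp: c_def\<close>)
  then have "emeasure lborel {c<..<x} = 0"
    by (subst (asm) AE_iff_measurable[where N="{c<..<x}"]) auto
  then show False using x b by (simp add: c_def)
qed

lemma eq_at_zero_if_increments_AE_zero:
  fixes D :: "real \<Rightarrow> real"
  assumes cont: "\<And>x. continuous (at_right x) D"
    and incr: "\<And>\<delta>. \<delta> > 0 \<Longrightarrow> AE s in lborel. s \<in> {0..} \<longrightarrow> D (\<delta> - s) - D (- s) = 0"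
    and x: "x < 0"
  shows "D x = D 0"
proof -
  have "continuous (at_left (-x)) (\<lambda>s. D (-x - s) - D (0 - s))"
    by (intro continuous_diff continuous_at_left_reflect cont)
  then have "D (-x - (-x)) - D (0 - (-x)) = 0"
    using x by (intro AE_zero_imp_zero_at_left_continuous[where a=0]) (use incr[of "-x"] in auto)
  then show ?thesis by simp
qed

lemma negative_restriction_eqI:
  fixes N1 N :: "real measure"
  assumes N1: "finite_borel_measure N1" and N: "finite_borel_measure N"
    and neg: "measure N1 {..<0} = measure N {..<0}"
    and incr: "\<And>\<delta>. \<delta> > 0 \<Longrightarrow> AE s in lborel. s \<in> {0..} \<longrightarrow>
       measure (negative_restriction N1) {-s<..\<delta>-s} - measure (negative_restriction N) {-s<..\<delta>-s} = 0"
  shows "negative_restriction N1 = negative_restriction N"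
proof -
  note restr = finite_borel_measure_negative_restriction
  have Ns: "sets N1 = sets borel" "sets N = sets borel"
    using N1 N by (simp_all add: finite_borel_measure.M_is_borel)
  define D where "D x = cdf (negative_restriction N1) x - cdf (negative_restriction N) x" for x
  have cont: "continuous (at_right x) D" for x
    unfolding D_def by (intro continuous_diff finite_borel_measure.cdf_is_right_cont restr N1 N)
  have "AE s in lborel. s \<in> {0..} \<longrightarrow> D (\<delta> - s) - D (- s) = 0" if "\<delta> > 0" for \<delta>
  proof -
    have cdf_incr: "measure (negative_restriction K) {-s<..\<delta>-s}
        = cdf (negative_restriction K) (\<delta> - s) - cdf (negative_restriction K) (- s)"
      if "finite_borel_measure K" for K s
      by (rule finite_borel_measure.cdf_diff_eq[OF restr[OF that], symmetric]) (use \<open>\<delta> > 0\<close> in simp)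
    show ?thesis
      using incr[OF that] by eventually_elim (use cdf_incr[OF N1] cdf_incr[OF N] in \<open>auto simp: D_def\<close>)
  qed
  note D_neg = eq_at_zero_if_increments_AE_zero[OF cont this]
  have cdf_nonneg: "cdf (negative_restriction K) x = measure K {..<0}"
    if "sets K = sets borel" "x \<ge> 0" for K x
  proof -
    have "{..<0} \<inter> {..x} = {..<0::real}" using that by auto
    then show ?thesis using that by (simp add: cdf_negative_restriction)
  qed
  have "D 0 = 0" using neg Ns by (simp add: D_def cdf_nonneg)
  then have "D x = 0" for x
    using D_neg[of x] neg Ns by (cases "x < 0") (auto simp: D_def cdf_nonneg)
  then show ?thesis
    by (intro cdf_unique' restr N1 N) (simp add: D_def fun_eq_iff)
qed

lemma translates_injective_imp_determined:
  fixes M M1 :: "real measure" and f :: "real \<Rightarrow> real"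
  assumes Mp: "prob_space M" and f: "f \<in> borel_measurable borel"
    and f_nonneg: "AE x in lborel. 0 \<le> f x"
    and dens: "M = density lborel (\<lambda>x. ennreal (f x))"
    and inj: "translates_injective f"
    and M1p: "prob_space M1" and M1s: "sets M1 = sets borel"
    and agree: "\<forall>A\<in>sets borel. A \<subseteq> {0..} \<longrightarrow> emeasure M1 A = emeasure M A"
    and agree_conv: "\<forall>A\<in>sets borel. A \<subseteq> {0..} \<longrightarrow> emeasure (M1 \<star> M1) A = emeasure (M \<star> M) A"
  shows "M1 = M"
proof -
  interpret M: prob_space M by fact
  interpret M1: prob_space M1 by fact
  have Ms: "sets M = sets borel" using dens by simp
  have fbm: "finite_borel_measure M1" "finite_borel_measure M"
    using M1s Ms M1.finite_measure_axioms M.finite_measure_axioms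
    by (simp_all add: finite_borel_measure_def finite_borel_measure_axioms_def)
  have "measure M1 {0..} = measure M {0..}"
    using agree by (simp add: measure_def)
  moreover have "measure K {..<0} = 1 - measure K {0..}" if "prob_space K" "sets K = sets borel" for K :: "real measure"
  proof -
    have "space K - {0..} = {..<0}" using sets_eq_imp_space_eq[OF that(2)] by auto
    then show ?thesis using that by (metis prob_space.prob_compl atLeast_borel)
  qed
  ultimately have neg: "measure M1 {..<0} = measure M {..<0}"
    using Mp M1p Ms M1s by simp
  have "AE s in lborel. s \<in> {0..} \<longrightarrow>
      measure (negative_restriction M1) {-s<..\<delta>-s} - measure (negative_restriction M) {-s<..\<delta>-s} = 0"
    if "\<delta> > 0" for \<delta>
  proof -
    have int: "set_integrable lborel {0..}
        (\<lambda>s. measure (negative_restriction M1) {-s<..\<delta>-s} - measure (negative_restriction M) {-s<..\<delta>-s})"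
      unfolding set_integrable_def using that
      by (intro integrable_mult_indicator Bochner_Integration.integrable_diff
          integrable_measure_reflected_interval finite_borel_measure_negative_restriction fbm) auto
    show ?thesis
      using inj[unfolded translates_injective_def, rule_format, OF int
          negative_restriction_increments_annihilated[OF Mp f f_nonneg dens
            M1.finite_measure_axioms M1s agree agree_conv less_imp_le[OF that]]]
      by simp
  qed
  then have "negative_restriction M1 = negative_restriction M"
    by (intro negative_restriction_eqI fbm neg)
  moreover have "density M1 (indicator {0..}) = density M (indicator {0..})"
    using M1s Ms agree by (intro density_indicator_eqI) auto
  ultimately show ?thesis
    using measure_eq_if_restrictions_eq[OF M1s Ms, of "{..<0}"]
    by (simp add: negative_restriction_def Compl_lessThan)
qed

theorem proposition3p4:
  fixes M :: "real measure" and f :: "real \<Rightarrow> real"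
  assumes prob: "prob_space M"
    and f_meas: "f \<in> borel_measurable borel"
    and f_nonneg: "AE x in lborel. f x \<ge> 0"
    and dens: "M = density lborel (\<lambda>x. ennreal (f x))"
    and supp: "\<not> (measure_support M \<subseteq> {..<0})"
  shows "(Linf_on {0..} f \<and> dense_Linf_nonneg (transl_span f) \<longrightarrow>
           (\<forall>g. set_integrable lborel {0..} g \<longrightarrow>
              (\<forall>t\<ge>0. set_integrable lborel {0..} (\<lambda>s. f (t + s) * g s)
                      \<and> (LINT s:{0..}|lborel. f (t + s) * g s) = 0) \<longrightarrow>
              (AE s in lborel. s \<in> {0..} \<longrightarrow> g s = 0)))
       \<and> ((\<forall>g. set_integrable lborel {0..} g \<longrightarrow>
              (\<forall>t\<ge>0. set_integrable lborel {0..} (\<lambda>s. f (t + s) * g s)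
                      \<and> (LINT s:{0..}|lborel. f (t + s) * g s) = 0) \<longrightarrow>
              (AE s in lborel. s \<in> {0..} \<longrightarrow> g s = 0))
          \<longrightarrow> (\<forall>M1 :: real measure. prob_space M1 \<and> sets M1 = sets borel
                 \<and> (\<forall>A\<in>sets borel. A \<subseteq> {0..} \<longrightarrow> emeasure M1 A = emeasure M A)
                 \<and> (\<forall>A\<in>sets borel. A \<subseteq> {0..} \<longrightarrow> emeasure (M1 \<star> M1) A = emeasure (M \<star> M) A)
                 \<longrightarrow> M1 = M))"
  using dense_transl_span_imp_translates_injective[of f]
    translates_injective_imp_determined[OF prob f_meas f_nonneg dens]
  unfolding translates_injective_def translates_annihilate_def
  by (intro conjI impI allI) blast+

end
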